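(* Let $m\geq 1$ be an integer. For all integers $n\geq 1$ and all real $x\in(0,\pi)$, $$\sum_{k=0}^n \binom{n-k+m}{m}\cos\bigl((k+1/2)x\bigr)>\begin{cases}-1/4, & m=1,\\ 0, & m\geq 2,\end{cases}$$ and $$\sum_{k=0}^n \binom{n-k+m}{m}\sin\bigl((k+1/2)x\bigr)>0.$$ All these lower bounds are sharp (the best possible constants valid for all $n\ge 1$, $x\in(0,\pi)$, for each fixed $m$ in the respective case). *)

theory Defs
  imports Complex_Main
begin

end

theory Submission
  imports Defs "HOL-Real_Asymp.Real_Asymp"
begin

text \<open>
  Multiplying by powers of \<open>2 sin (x/2)\<close> makes the sums telescope. This gives closed forms for
  the sine sum of order 0, \<open>(1 - cos ((n+1) x)) / (2 sin (x/2)) \<ge> 0\<close>, and for the cosine sums of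
  order 1 and 2:
    \<open>(1 - cos ((n + 3/2) x)) / (4 sin (x/2)^2) - 1 / (4 (1 + cos (x/2)))\<close>  and
    \<open>((n+2) sin x - sin ((n+2) x)) / (8 sin (x/2)^3)\<close>.
  The first exceeds \<open>-1/4\<close>, the second is positive because \<open>|sin (N x)| < N sin x\<close> for \<open>N \<ge> 2\<close>.
  Since the Cesaro sum of order \<open>m + 1\<close> is the partial sum of those of order \<open>m\<close>,
  positivity propagates to all higher orders. For sharpness take \<open>n = 1\<close> and let \<open>x\<close> tend
  to \<open>0\<close> (sine) or to \<open>pi\<close> (cosine); for order 1 let \<open>x\<close> tend to \<open>pi\<close> through points
  where \<open>(n + 3/2) x\<close> is a multiple of \<open>2 pi\<close>.
\<close>

definition cesaro_sum :: "nat \<Rightarrow> nat \<Rightarrow> (nat \<Rightarrow> real) \<Rightarrow> real" where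
  "cesaro_sum m n f = (\<Sum>k=0..n. real ((n - k + m) choose m) * f k)"

lemma cesaro_sum_0_right [simp]: "cesaro_sum m 0 f = f 0"
  by (simp add: cesaro_sum_def)

lemma cesaro_sum_1_right: "cesaro_sum m 1 f = real (Suc m) * f 0 + f 1"
  by (simp add: cesaro_sum_def)

lemma cesaro_sum_0_left: "cesaro_sum 0 n f = (\<Sum>k=0..n. f k)"
  by (simp add: cesaro_sum_def)

lemma cesaro_sum_Suc_Suc:
  "cesaro_sum (Suc m) (Suc n) f = cesaro_sum (Suc m) n f + cesaro_sum m (Suc n) f"
proof -
  have "real ((Suc n - k + Suc m) choose Suc m)
          = real ((n - k + Suc m) choose Suc m) + real ((Suc n - k + m) choose m)"
    if "k \<le> n" for k
  proof -
    have "Suc n - k + Suc m = Suc (n - k + Suc m)" "Suc n - k + m = n - k + Suc m"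
      using that by simp_all
    then show ?thesis by (simp add: binomial_Suc_Suc)
  qed
  then have "(\<Sum>k=0..n. real ((Suc n - k + Suc m) choose Suc m) * f k)
      = cesaro_sum (Suc m) n f + (\<Sum>k=0..n. real ((Suc n - k + m) choose m) * f k)"
    by (simp add: cesaro_sum_def distrib_right sum.distrib)
  then show ?thesis by (simp add: cesaro_sum_def add_ac)
qed

lemma cesaro_sum_Suc_left: "cesaro_sum (Suc m) n f = (\<Sum>j=0..n. cesaro_sum m j f)"
  by (induction n) (simp_all add: cesaro_sum_Suc_Suc)

lemma cesaro_sum_pos_of_nonneg:
  assumes "\<And>j. 0 \<le> cesaro_sum m j f" and "0 < f 0" and "m < m'"
  shows "0 < cesaro_sum m' n f"
  using assms(3)
proof (induction m' arbitrary: n rule: less_induct)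
  case (less m')
  then obtain l where l: "m' = Suc l" "m \<le> l"
    by (cases m') auto
  have "0 \<le> cesaro_sum l j f" for j
    using assms(1) less l by (cases "m = l") (auto intro: less_imp_le)
  moreover have "0 < cesaro_sum l 0 f"
    using assms(2) by simp
  ultimately have "0 < cesaro_sum l 0 f + (\<Sum>j=1..n. cesaro_sum l j f)"
    by (simp add: add_pos_nonneg sum_nonneg)
  then show ?case
    by (simp add: l cesaro_sum_Suc_left sum.atLeast_Suc_atMost)
qed

lemma two_sin_half_times_cos:
  fixes t x :: real
  shows "2 * sin (x/2) * cos ((t + 1/2) * x) = sin ((t + 1) * x) - sin (t * x)"
proof -
  have shift: "(t + 1) * x = (t + 1/2) * x + x/2" "t * x = (t + 1/2) * x - x/2"
    by (simp_all add: algebra_simps)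
  show ?thesis
    unfolding shift sin_add sin_diff by (simp add: algebra_simps)
qed

lemma two_sin_half_times_sin:
  fixes t x :: real
  shows "2 * sin (x/2) * sin ((t + 1/2) * x) = cos (t * x) - cos ((t + 1) * x)"
proof -
  have shift: "(t + 1) * x = (t + 1/2) * x + x/2" "t * x = (t + 1/2) * x - x/2"
    by (simp_all add: algebra_simps)
  show ?thesis
    unfolding shift cos_add cos_diff by (simp add: algebra_simps)
qed

lemma cesaro_sum_cos_0:
  "2 * sin (x/2) * cesaro_sum 0 n (\<lambda>k. cos ((real k + 1/2) * x)) = sin ((real n + 1) * x)"
proof -
  have step: "2 * sin (x/2) * cos ((real k + 1/2) * x) = sin (real (Suc k) * x) - sin (real k * x)"
    for k
    using two_sin_half_times_cos[of x "real k"] by (simp add: add_ac)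
  have "2 * sin (x/2) * cesaro_sum 0 n (\<lambda>k. cos ((real k + 1/2) * x))
          = (\<Sum>k=0..n. sin (real (Suc k) * x) - sin (real k * x))"
    by (simp only: cesaro_sum_0_left sum_distrib_left step)
  also have "\<dots> = sin (real (Suc n) * x) - sin (real 0 * x)"
    by (rule sum_Suc_diff) simp
  finally show ?thesis
    by (simp add: add_ac)
qed

lemma cesaro_sum_sin_0:
  "2 * sin (x/2) * cesaro_sum 0 n (\<lambda>k. sin ((real k + 1/2) * x)) = 1 - cos ((real n + 1) * x)"
proof -
  have step: "2 * sin (x/2) * sin ((real k + 1/2) * x)
                = - cos (real (Suc k) * x) - - cos (real k * x)" for k
    using two_sin_half_times_sin[of x "real k"] by (simp add: add_ac)
  have "2 * sin (x/2) * cesaro_sum 0 n (\<lambda>k. sin ((real k + 1/2) * x))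
          = (\<Sum>k=0..n. - cos (real (Suc k) * x) - - cos (real k * x))"
    by (simp only: cesaro_sum_0_left sum_distrib_left step)
  also have "\<dots> = - cos (real (Suc n) * x) - - cos (real 0 * x)"
    by (rule sum_Suc_diff) simp
  finally show ?thesis
    by (simp add: add_ac)
qed

lemma cesaro_sum_cos_1:
  "4 * sin (x/2)^2 * cesaro_sum 1 n (\<lambda>k. cos ((real k + 1/2) * x))
     = cos (x/2) - cos ((real n + 3/2) * x)"
proof -
  have step: "2 * sin (x/2) * sin ((real j + 1) * x)
                = - cos ((real (Suc j) + 1/2) * x) - - cos ((real j + 1/2) * x)" for j
  proof -
    have "real j + 1/2 + 1/2 = real j + 1" "real j + 1/2 + 1 = real (Suc j) + 1/2"
      by simp_all
    then show ?thesis
      using two_sin_half_times_sin[of x "real j + 1/2"] by (simp add: add.commute)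
  qed
  have "4 * sin (x/2)^2 * cesaro_sum 1 n (\<lambda>k. cos ((real k + 1/2) * x))
          = (\<Sum>j=0..n. 2 * sin (x/2) * (2 * sin (x/2) * cesaro_sum 0 j (\<lambda>k. cos ((real k + 1/2) * x))))"
    by (simp add: cesaro_sum_Suc_left[of 0, simplified] sum_distrib_left power2_eq_square mult_ac)
  also have "\<dots> = (\<Sum>j=0..n. - cos ((real (Suc j) + 1/2) * x) - - cos ((real j + 1/2) * x))"
    by (simp only: cesaro_sum_cos_0 step)
  also have "\<dots> = - cos ((real (Suc n) + 1/2) * x) - - cos ((real 0 + 1/2) * x)"
    by (rule sum_Suc_diff) simp
  finally show ?thesis
    by (simp add: add.commute)
qed

lemma cesaro_sum_cos_2:
  "8 * sin (x/2)^3 * cesaro_sum 2 n (\<lambda>k. cos ((real k + 1/2) * x))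
     = (real n + 2) * sin x - sin ((real n + 2) * x)"
proof -
  have step: "2 * sin (x/2) * (cos (x/2) - cos ((real j + 3/2) * x))
                = sin x - (sin ((real (Suc j) + 1) * x) - sin ((real j + 1) * x))" for j
  proof -
    have "real j + 1 + 1/2 = real j + 3/2" "real j + 1 + 1 = real (Suc j) + 1"
      by simp_all
    then have "2 * sin (x/2) * cos ((real j + 3/2) * x) = sin ((real (Suc j) + 1) * x) - sin ((real j + 1) * x)"
      using two_sin_half_times_cos[of x "real j + 1"] by (simp add: add.commute)
    moreover have "2 * sin (x/2) * cos (x/2) = sin x"
      using sin_double[of "x/2"] by simp
    ultimately show ?thesis
      by (simp add: right_diff_distrib)
  qed
  have "8 * sin (x/2)^3 * cesaro_sum 2 n (\<lambda>k. cos ((real k + 1/2) * x))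
          = (\<Sum>j=0..n. 2 * sin (x/2) * (4 * sin (x/2)^2 * cesaro_sum 1 j (\<lambda>k. cos ((real k + 1/2) * x))))"
    by (simp add: cesaro_sum_Suc_left[of 1, simplified] sum_distrib_left power2_eq_square
        power3_eq_cube mult_ac numeral_2_eq_2)
  also have "\<dots> = (\<Sum>j=0..n. sin x - (sin ((real (Suc j) + 1) * x) - sin ((real j + 1) * x)))"
    by (simp only: cesaro_sum_cos_1 step)
  also have "\<dots> = real (Suc n) * sin x - (sin ((real (Suc n) + 1) * x) - sin ((real 0 + 1) * x))"
  proof -
    have "(\<Sum>j=0..n. sin ((real (Suc j) + 1) * x) - sin ((real j + 1) * x))
            = sin ((real (Suc n) + 1) * x) - sin ((real 0 + 1) * x)"
      by (rule sum_Suc_diff) simp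
    then show ?thesis
      by (subst sum_subtractf) simp
  qed
  finally show ?thesis
    by (simp add: algebra_simps)
qed

lemma abs_cos_less_1_of_sin_nonzero:
  fixes x :: real
  assumes "sin x \<noteq> 0"
  shows "\<bar>cos x\<bar> < 1"
proof -
  have "0 < (sin x)^2"
    using assms by simp
  then have "(cos x)^2 < 1"
    using sin_cos_squared_add[of x] by linarith
  then show ?thesis
    by (simp add: abs_square_less_1)
qed

lemma abs_sin_Suc_mult_le:
  "\<bar>sin (real (Suc M) * x)\<bar> \<le> \<bar>sin (real M * x)\<bar> * \<bar>cos x\<bar> + \<bar>sin x\<bar>"
proof -
  have "\<bar>sin (real (Suc M) * x)\<bar> = \<bar>sin (real M * x) * cos x + cos (real M * x) * sin x\<bar>"
    by (simp add: distrib_right sin_add algebra_simps)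
  also have "\<dots> \<le> \<bar>sin (real M * x)\<bar> * \<bar>cos x\<bar> + \<bar>cos (real M * x)\<bar> * \<bar>sin x\<bar>"
    by (metis abs_mult abs_triangle_ineq)
  also have "\<dots> \<le> \<bar>sin (real M * x)\<bar> * \<bar>cos x\<bar> + \<bar>sin x\<bar>"
    using mult_right_mono[OF abs_cos_le_one, of "\<bar>sin x\<bar>"] by simp
  finally show ?thesis .
qed

lemma abs_sin_mult_le: "\<bar>sin (real N * x)\<bar> \<le> real N * \<bar>sin x\<bar>"
proof (induction N)
  case 0
  then show ?case by simp
next
  case (Suc N)
  have "\<bar>sin (real N * x)\<bar> * \<bar>cos x\<bar> \<le> real N * \<bar>sin x\<bar> * 1"
    by (intro mult_mono) (use Suc.IH in auto)
  then show ?case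
    using abs_sin_Suc_mult_le[of N x] by (simp add: algebra_simps)
qed

lemma abs_sin_mult_less:
  assumes "sin x \<noteq> 0" and "N \<ge> 2"
  shows "\<bar>sin (real N * x)\<bar> < real N * \<bar>sin x\<bar>"
proof -
  obtain M where N: "N = Suc M" and M: "M \<ge> 1"
    using assms(2) by (cases N) auto
  have "\<bar>sin (real M * x)\<bar> * \<bar>cos x\<bar> \<le> real M * \<bar>sin x\<bar> * \<bar>cos x\<bar>"
    by (intro mult_right_mono abs_sin_mult_le) simp
  also have "\<dots> < real M * \<bar>sin x\<bar> * 1"
    using abs_cos_less_1_of_sin_nonzero[OF assms(1)] assms(1) M
    by (intro mult_strict_left_mono) auto
  finally show ?thesis
    using abs_sin_Suc_mult_le[of M x] by (simp add: N algebra_simps)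
qed

lemma sin_cos_half_pos:
  assumes "0 < x" and "x < pi"
  shows "0 < sin (x/2)" and "0 < cos (x/2)"
  using assms by (auto intro: sin_gt_zero cos_gt_zero_pi)

lemma cesaro_sum_sin_pos:
  assumes "0 < x" and "x < pi" and "m \<ge> 1"
  shows "0 < cesaro_sum m n (\<lambda>k. sin ((real k + 1/2) * x))"
proof (rule cesaro_sum_pos_of_nonneg)
  show "0 \<le> cesaro_sum 0 j (\<lambda>k. sin ((real k + 1/2) * x))" for j
  proof -
    have "0 \<le> 2 * sin (x/2) * cesaro_sum 0 j (\<lambda>k. sin ((real k + 1/2) * x))"
      by (simp only: cesaro_sum_sin_0) simp
    then show ?thesis
      using sin_cos_half_pos[OF assms(1,2)] by (simp add: zero_le_mult_iff)
  qed
  show "0 < sin ((real 0 + 1/2) * x)"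
    using sin_cos_half_pos[OF assms(1,2)] by simp
qed (use assms(3) in simp)

lemma cesaro_sum_cos_1_eq:
  assumes "sin (x/2) \<noteq> 0"
  shows "cesaro_sum 1 n (\<lambda>k. cos ((real k + 1/2) * x))
           = (1 - cos ((real n + 3/2) * x)) / (4 * sin (x/2)^2) - 1 / (4 * (1 + cos (x/2)))"
proof -
  have "0 < 1 + cos (x/2)"
    using abs_cos_less_1_of_sin_nonzero[OF assms] by linarith
  moreover have "sin (x/2)^2 = (1 - cos (x/2)) * (1 + cos (x/2))"
    by (simp add: sin_squared_eq algebra_simps power2_eq_square)
  ultimately have "(1 - cos (x/2)) / (4 * sin (x/2)^2) = 1 / (4 * (1 + cos (x/2)))"
    using assms by (simp add: field_simps)
  moreover have "cesaro_sum 1 n (\<lambda>k. cos ((real k + 1/2) * x))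
                   = (cos (x/2) - cos ((real n + 3/2) * x)) / (4 * sin (x/2)^2)"
    using assms cesaro_sum_cos_1[of x n] by (simp add: field_simps)
  ultimately show ?thesis
    by (simp add: diff_divide_distrib)
qed

lemma cesaro_sum_cos_1_gt:
  assumes "0 < x" and "x < pi"
  shows "-1/4 < cesaro_sum 1 n (\<lambda>k. cos ((real k + 1/2) * x))"
proof -
  note half = sin_cos_half_pos[OF assms]
  then have "sin (x/2) \<noteq> 0"
    by simp
  note eq = cesaro_sum_cos_1_eq[OF this, of n]
  have "0 \<le> (1 - cos ((real n + 3/2) * x)) / (4 * sin (x/2)^2)"
    by simp
  moreover have "-1/4 < - 1 / (4 * (1 + cos (x/2)))"
    using half by (simp add: field_simps)
  ultimately show ?thesis
    unfolding eq by linarith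
qed

lemma cesaro_sum_cos_2_pos:
  assumes "0 < x" and "x < pi"
  shows "0 < cesaro_sum 2 n (\<lambda>k. cos ((real k + 1/2) * x))"
proof -
  have "0 < sin x"
    using assms by (rule sin_gt_zero)
  then have "\<bar>sin (real (n + 2) * x)\<bar> < real (n + 2) * sin x"
    using abs_sin_mult_less[of x "n + 2"] by simp
  then have "0 < 8 * sin (x/2)^3 * cesaro_sum 2 n (\<lambda>k. cos ((real k + 1/2) * x))"
    unfolding cesaro_sum_cos_2 by (simp add: abs_less_iff add.commute)
  then show ?thesis
    using sin_cos_half_pos[OF assms] by (simp add: zero_less_mult_iff)
qed

lemma cesaro_sum_cos_pos:
  assumes "0 < x" and "x < pi" and "m \<ge> 2"
  shows "0 < cesaro_sum m n (\<lambda>k. cos ((real k + 1/2) * x))"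
proof (cases "m = 2")
  case True
  then show ?thesis
    using cesaro_sum_cos_2_pos[OF assms(1,2)] by simp
next
  case False
  show ?thesis
  proof (rule cesaro_sum_pos_of_nonneg)
    show "0 \<le> cesaro_sum 2 j (\<lambda>k. cos ((real k + 1/2) * x))" for j
      using cesaro_sum_cos_2_pos[OF assms(1,2)] less_imp_le by blast
    show "0 < cos ((real 0 + 1/2) * x)"
      using sin_cos_half_pos[OF assms(1,2)] by simp
  qed (use assms(3) False in simp)
qed

lemma tendsto_imp_ex_less:
  fixes f :: "'a \<Rightarrow> real"
  assumes "(f \<longlongrightarrow> l) F" and "F \<noteq> bot" and "eventually (\<lambda>x. x \<in> S) F" and "l < c"
  shows "\<exists>x\<in>S. f x < c"
proof -
  have "eventually (\<lambda>x. x \<in> S \<and> f x < c) F"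
    using assms(3) order_tendstoD(2)[OF assms(1,4)] by (rule eventually_conj)
  then show ?thesis
    using eventually_happens'[OF assms(2)] by blast
qed

lemma tendsto_cesaro_sum_1_sin:
  "((\<lambda>x. cesaro_sum m 1 (\<lambda>k. sin ((real k + 1/2) * x))) \<longlongrightarrow> 0) (at_right 0)"
  unfolding cesaro_sum_1_right by (auto intro!: tendsto_eq_intros)

lemma tendsto_cesaro_sum_1_cos:
  "((\<lambda>x. cesaro_sum m 1 (\<lambda>k. cos ((real k + 1/2) * x))) \<longlongrightarrow> 0) (at_left pi)"
proof -
  have "cos (3/2 * pi) = 0"
    using cos_periodic_pi[of "pi/2"] by (simp add: field_simps)
  then show ?thesis
    unfolding cesaro_sum_1_right by (auto intro!: tendsto_eq_intros)
qed

lemma ex_cesaro_sum_sin_less: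
  assumes "0 < \<epsilon>"
  shows "\<exists>x. 0 < x \<and> x < pi \<and> cesaro_sum m 1 (\<lambda>k. sin ((real k + 1/2) * x)) < \<epsilon>"
  using tendsto_imp_ex_less[OF tendsto_cesaro_sum_1_sin[of m] _ eventually_at_right_real[OF pi_gt_zero] assms]
  by auto

lemma ex_cesaro_sum_cos_less:
  assumes "0 < \<epsilon>"
  shows "\<exists>x. 0 < x \<and> x < pi \<and> cesaro_sum m 1 (\<lambda>k. cos ((real k + 1/2) * x)) < \<epsilon>"
  using tendsto_imp_ex_less[OF tendsto_cesaro_sum_1_cos[of m] _ eventually_at_left_real[OF pi_gt_zero] assms]
  by auto

lemma ex_cesaro_sum_cos_1_less:
  assumes "0 < \<epsilon>"
  shows "\<exists>n x. 1 \<le> n \<and> 0 < x \<and> x < pi \<and>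
           cesaro_sum 1 n (\<lambda>k. cos ((real k + 1/2) * x)) < -1/4 + \<epsilon>"
proof -
  \<comment> \<open>At these points the oscillating term of \<open>cesaro_sum_cos_1_eq\<close> vanishes, because
    \<open>(n + 3/2) * x j\<close> is a multiple of \<open>2 * pi\<close>, while \<open>x j\<close> tends to \<open>pi\<close>.\<close>
  define x where "x j = 4 * pi * (real j + 1) / (4 * real j + 5)" for j
  have x_bounds: "0 < x j" "x j < pi" for j
    unfolding x_def by (simp_all add: field_simps add_pos_nonneg)
  have resonant: "cos ((real (2 * j + 1) + 3/2) * x j) = 1" for j
  proof -
    have "(real (2 * j + 1) + 3/2) * x j = 2 * real (Suc j) * pi"
      unfolding x_def by (simp add: field_simps)
    then show ?thesis
      by (simp only: cos_2npi)
  qed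
  have value_at: "cesaro_sum 1 (2 * j + 1) (\<lambda>k. cos ((real k + 1/2) * x j))
                  = -1 / (4 * (1 + cos (x j / 2)))" for j
  proof -
    have "sin (x j / 2) \<noteq> 0"
      using sin_cos_half_pos(1)[OF x_bounds, of j] by linarith
    then show ?thesis
      using cesaro_sum_cos_1_eq[of "x j" "2 * j + 1"] resonant[of j] by simp
  qed
  have "(x \<longlongrightarrow> pi) sequentially"
    unfolding x_def by real_asymp
  then have "((\<lambda>j. cesaro_sum 1 (2 * j + 1) (\<lambda>k. cos ((real k + 1/2) * x j)))
               \<longlongrightarrow> -1/4) sequentially"
    unfolding value_at by (auto intro!: tendsto_eq_intros)
  then obtain j where "cesaro_sum 1 (2 * j + 1) (\<lambda>k. cos ((real k + 1/2) * x j)) < -1/4 + \<epsilon>"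
    using tendsto_imp_ex_less[of _ _ _ UNIV] assms by fastforce
  then show ?thesis
    using x_bounds[of j] by (intro exI[of _ "2 * j + 1"] exI[of _ "x j"]) simp
qed

theorem theorem2:
  fixes m :: nat
  assumes "m \<ge> 1"
  shows "(\<forall>n::nat. \<forall>x::real. n \<ge> 1 \<and> 0 < x \<and> x < pi \<longrightarrow>
            (\<Sum>k=0..n. real ((n - k + m) choose m) * cos ((real k + 1/2) * x))
              > (if m = 1 then -1/4 else 0))
       \<and> (\<forall>n::nat. \<forall>x::real. n \<ge> 1 \<and> 0 < x \<and> x < pi \<longrightarrow>
            (\<Sum>k=0..n. real ((n - k + m) choose m) * sin ((real k + 1/2) * x)) > 0)
       \<and> (\<forall>\<epsilon>::real. \<epsilon> > 0 \<longrightarrow> (\<exists>n::nat. \<exists>x::real. n \<ge> 1 \<and> 0 < x \<and> x < pi \<and>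
            (\<Sum>k=0..n. real ((n - k + m) choose m) * cos ((real k + 1/2) * x))
              < (if m = 1 then -1/4 else 0) + \<epsilon>))
       \<and> (\<forall>\<epsilon>::real. \<epsilon> > 0 \<longrightarrow> (\<exists>n::nat. \<exists>x::real. n \<ge> 1 \<and> 0 < x \<and> x < pi \<and>
            (\<Sum>k=0..n. real ((n - k + m) choose m) * sin ((real k + 1/2) * x)) < \<epsilon>))"
  unfolding cesaro_sum_def [symmetric]
proof (intro conjI allI impI)
  fix n :: nat and x :: real
  assume "1 \<le> n \<and> 0 < x \<and> x < pi"
  then show "(if m = 1 then -1/4 else 0) < cesaro_sum m n (\<lambda>k. cos ((real k + 1/2) * x))"
    and "0 < cesaro_sum m n (\<lambda>k. sin ((real k + 1/2) * x))"
    using assms cesaro_sum_cos_1_gt cesaro_sum_cos_pos cesaro_sum_sin_pos by auto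
next
  fix \<epsilon> :: real
  assume "0 < \<epsilon>"
  then show "\<exists>n x. 1 \<le> n \<and> 0 < x \<and> x < pi \<and>
               cesaro_sum m n (\<lambda>k. cos ((real k + 1/2) * x)) < (if m = 1 then -1/4 else 0) + \<epsilon>"
    using ex_cesaro_sum_cos_1_less ex_cesaro_sum_cos_less[of \<epsilon> m] by (cases "m = 1") auto
  show "\<exists>n x. 1 \<le> n \<and> 0 < x \<and> x < pi \<and> cesaro_sum m n (\<lambda>k. sin ((real k + 1/2) * x)) < \<epsilon>"
    using ex_cesaro_sum_sin_less[OF \<open>0 < \<epsilon>\<close>, of m] by auto
qed

end
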